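(* Let $n\geq1$, $m\geq0$, and let $(v=v^0\sim v^1\sim\dots\sim v^d=u)$ be a geodesic (shortest path) in the dYoke graph $Z_{n,m}$. Then for every $0\leq i\leq m$, all steps of this path that are shifts at $i$ are shifts in the same direction (all left shifts at $i$ or all right shifts at $i$).
   Context: Elements of $\mathbb{Z}_n$ are identified with representatives in $\{0,\dots,n-1\}$. $Z_{n,m}$ has vertices $u=(u_0,\dots,u_{m+1})\in\mathbb{Z}_n\times\{-1,0,1\}^m\times\mathbb{Z}_n$ with $\sum u_i\equiv0\pmod n$. A step from $v$ to $u$ is a left shift at $i$ ($0\le i\le m$) if $u_j=v_j$ for $j\notin\{i,i+1\}$, $u_i=v_i+1$ and $u_{i+1}=v_{i+1}-1$ (a unit moved from entry $i+1$ to entry $i$), and a right shift at $i$ if $u_i=v_i-1$, $u_{i+1}=v_{i+1}+1$; arithmetic in coordinates $0,m+1$ is in $\mathbb{Z}_n$, in coordinates $1,\dots,m$ in $\mathbb{Z}$ (values must remain in $\{-1,0,1\}$). Two vertices are adjacent iff one is obtained from the other by such a shift. *)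

theory Defs
  imports Main
begin

text \<open>Vertices of the dYoke graph Z_{n,m} are encoded as functions u :: nat => int,
  with entries u 0, ..., u (m+1) meaningful and all other entries equal to 0.
  Coordinates 0 and m+1 are representatives in {0..n-1} of Z_n,
  coordinates 1..m lie in {-1,0,1}.\<close>

definition zvert :: "nat \<Rightarrow> nat \<Rightarrow> (nat \<Rightarrow> int) \<Rightarrow> bool" where
  "zvert n m u \<longleftrightarrow>
     0 \<le> u 0 \<and> u 0 < int n \<and> 0 \<le> u (m+1) \<and> u (m+1) < int n
   \<and> (\<forall>j\<in>{1..m}. u j \<in> {-1, 0, 1})
   \<and> (\<forall>j>m+1. u j = 0)
   \<and> (\<Sum>j\<le>m+1. u j) mod int n = 0"

definition zadd :: "nat \<Rightarrow> nat \<Rightarrow> nat \<Rightarrow> int \<Rightarrow> int \<Rightarrow> int" where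
  "zadd n m j a x = (if j = 0 \<or> j = m+1 then (a + x) mod int n else a + x)"

definition left_shift :: "nat \<Rightarrow> nat \<Rightarrow> nat \<Rightarrow> (nat \<Rightarrow> int) \<Rightarrow> (nat \<Rightarrow> int) \<Rightarrow> bool" where
  "left_shift n m i v u \<longleftrightarrow>
     i \<le> m \<and> zvert n m v \<and> zvert n m u
   \<and> (\<forall>j. j \<noteq> i \<and> j \<noteq> Suc i \<longrightarrow> u j = v j)
   \<and> u i = zadd n m i (v i) 1
   \<and> u (Suc i) = zadd n m (Suc i) (v (Suc i)) (-1)"

definition right_shift :: "nat \<Rightarrow> nat \<Rightarrow> nat \<Rightarrow> (nat \<Rightarrow> int) \<Rightarrow> (nat \<Rightarrow> int) \<Rightarrow> bool" where
  "right_shift n m i v u \<longleftrightarrow>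
     i \<le> m \<and> zvert n m v \<and> zvert n m u
   \<and> (\<forall>j. j \<noteq> i \<and> j \<noteq> Suc i \<longrightarrow> u j = v j)
   \<and> u i = zadd n m i (v i) (-1)
   \<and> u (Suc i) = zadd n m (Suc i) (v (Suc i)) 1"

definition zadj :: "nat \<Rightarrow> nat \<Rightarrow> (nat \<Rightarrow> int) \<Rightarrow> (nat \<Rightarrow> int) \<Rightarrow> bool" where
  "zadj n m v u \<longleftrightarrow> (\<exists>i\<le>m. left_shift n m i v u \<or> right_shift n m i v u)"

definition zwalk :: "nat \<Rightarrow> nat \<Rightarrow> (nat \<Rightarrow> nat \<Rightarrow> int) \<Rightarrow> nat \<Rightarrow> bool" where
  "zwalk n m p d \<longleftrightarrow> (\<forall>k\<le>d. zvert n m (p k)) \<and> (\<forall>k<d. zadj n m (p k) (p (Suc k)))"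

definition zgeodesic :: "nat \<Rightarrow> nat \<Rightarrow> (nat \<Rightarrow> nat \<Rightarrow> int) \<Rightarrow> nat \<Rightarrow> bool" where
  "zgeodesic n m p d \<longleftrightarrow> zwalk n m p d \<and>
     (\<forall>q d'. zwalk n m q d' \<and> q 0 = p 0 \<and> q d' = p d \<longrightarrow> d \<le> d')"

end

theory Submission
  imports Defs
begin

text \<open>Suppose a geodesic contains a left and a right shift at the same position. Choose such an
  opposite pair at steps s < t that is innermost: no other opposite pair at a common position lies
  between them. Then no shift at i happens in between, and the coordinates i and i+1 never take
  the value that would block the reverse shift, since entering and leaving it would need a nested
  opposite pair at i-1 or i+1. So the reverse shift can be applied to every vertex between s and t,
  which cancels the two shifts and gives a walk between the same endpoints that is two steps
  shorter.\<close>

definition move :: "nat \<Rightarrow> nat \<Rightarrow> nat \<Rightarrow> int \<Rightarrow> (nat \<Rightarrow> int) \<Rightarrow> nat \<Rightarrow> int" where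
  "move n m i a v = v(i := zadd n m i (v i) a, Suc i := zadd n m (Suc i) (v (Suc i)) (-a))"

definition shift :: "nat \<Rightarrow> nat \<Rightarrow> nat \<Rightarrow> int \<Rightarrow> (nat \<Rightarrow> int) \<Rightarrow> (nat \<Rightarrow> int) \<Rightarrow> bool" where
  "shift n m i a v u \<longleftrightarrow>
     (a = 1 \<or> a = -1) \<and> i \<le> m \<and> zvert n m v \<and> zvert n m u \<and> u = move n m i a v"

definition opposite_shifts ::
    "nat \<Rightarrow> nat \<Rightarrow> (nat \<Rightarrow> nat \<Rightarrow> int) \<Rightarrow> nat \<Rightarrow> int \<Rightarrow> nat \<Rightarrow> nat \<Rightarrow> bool" where
  "opposite_shifts n m p i a s t \<longleftrightarrow>
     s < t \<and> shift n m i a (p s) (p (Suc s)) \<and> shift n m i (-a) (p t) (p (Suc t))"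

lemma move_eq_iff:
  "u = move n m i a v \<longleftrightarrow>
     (\<forall>j. j \<noteq> i \<and> j \<noteq> Suc i \<longrightarrow> u j = v j)
     \<and> u i = zadd n m i (v i) a \<and> u (Suc i) = zadd n m (Suc i) (v (Suc i)) (-a)"
  by (auto simp: move_def)

lemma left_shift_iff_shift: "left_shift n m i v u \<longleftrightarrow> shift n m i 1 v u"
  unfolding left_shift_def shift_def move_eq_iff by auto

lemma right_shift_iff_shift: "right_shift n m i v u \<longleftrightarrow> shift n m i (-1) v u"
  unfolding right_shift_def shift_def move_eq_iff by auto

lemma zadj_iff_shift: "zadj n m v u \<longleftrightarrow> (\<exists>i a. shift n m i a v u)"
  unfolding zadj_def left_shift_iff_shift right_shift_iff_shift by (auto simp: shift_def)

lemma shift_unit: "shift n m i a v u \<Longrightarrow> a = 1 \<or> a = -1"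
  by (simp add: shift_def)

lemma zwalk_step_shift:
  assumes "zwalk n m p d" "k < d"
  obtains i a where "shift n m i a (p k) (p (Suc k))"
  using assms by (auto simp: zwalk_def zadj_iff_shift)

lemma zadd_zadd_commute: "zadd n m j (zadd n m j x a) b = zadd n m j (zadd n m j x b) a"
  by (simp add: zadd_def mod_add_left_eq mod_add_right_eq add_ac)

lemma zadd_zadd_cancel:
  assumes "zvert n m v" "j \<le> m + 1"
  shows "zadd n m j (zadd n m j (v j) a) (-a) = v j"
proof (cases "j = 0 \<or> j = m + 1")
  case True
  then have "0 \<le> v j \<and> v j < int n" using assms by (auto simp: zvert_def)
  with True show ?thesis by (simp add: zadd_def mod_diff_left_eq)
qed (simp add: zadd_def)

lemma move_commute: "move n m i a (move n m j b v) = move n m j b (move n m i a v)"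
  by (rule ext) (auto simp: move_def zadd_zadd_commute)

lemma move_move_cancel:
  assumes "zvert n m v" "i \<le> m"
  shows "move n m i (-a) (move n m i a v) = v"
  using assms zadd_zadd_cancel[OF assms(1), of i a] zadd_zadd_cancel[OF assms(1), of "Suc i" "-a"]
  by (auto simp: move_def)

lemma shift_interior_coordinate:
  assumes "shift n m j b v u" "1 \<le> c" "c \<le> m"
  shows "u c = v c + (if c = j then b else if c = Suc j then -b else 0)"
  using assms by (auto simp: shift_def move_def zadd_def)

lemma zvert_interior_range: "zvert n m v \<Longrightarrow> 1 \<le> c \<Longrightarrow> c \<le> m \<Longrightarrow> v c \<in> {-1, 0, 1}"
  by (simp add: zvert_def)

lemma zvert_move:
  assumes v: "zvert n m v" and i: "i \<le> m"
    and left: "1 \<le> i \<Longrightarrow> v i + a \<in> {-1, 0, 1}"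
    and right: "Suc i \<le> m \<Longrightarrow> v (Suc i) - a \<in> {-1, 0, 1}"
  shows "zvert n m (move n m i a v)"
proof -
  let ?u = "move n m i a v"
  let ?c = "\<lambda>j. (if j = i then a else 0) - (if j = Suc i then a else (0::int))"
  have n: "int n > 0"
    using v by (simp add: zvert_def)
  have "?u j mod int n = (v j + ?c j) mod int n" for j
    by (auto simp: move_def zadd_def)
  then have "(\<Sum>j\<le>m+1. ?u j) mod int n = (\<Sum>j\<le>m+1. v j + ?c j) mod int n"
    by (subst (1 2) mod_sum_eq[symmetric]) simp
  also have "(\<Sum>j\<le>m+1. v j + ?c j) = (\<Sum>j\<le>m+1. v j)"
    using i by (simp add: sum.distrib sum_subtractf)
  finally have sum: "(\<Sum>j\<le>m+1. ?u j) mod int n = 0"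
    using v by (simp add: zvert_def)
  have boundary: "0 \<le> ?u j \<and> ?u j < int n" if "j = 0 \<or> j = m + 1" for j
  proof (cases "j = i \<or> j = Suc i")
    case True
    then show ?thesis using that n by (auto simp: move_def zadd_def)
  next
    case False
    then show ?thesis using that v by (auto simp: move_def zvert_def)
  qed
  have interior: "?u j \<in> {-1, 0, 1}" if "1 \<le> j" "j \<le> m" for j
    using that v left right by (auto simp: move_def zadd_def zvert_def)
  have outside: "?u j = 0" if "j > m + 1" for j
    using that v i by (auto simp: move_def zvert_def)
  show ?thesis
    unfolding zvert_def using boundary[of 0] boundary[of "m + 1"] interior outside sum by auto
qed

lemma shift_move:
  assumes "shift n m j b v u" "zvert n m (move n m i a v)" "zvert n m (move n m i a u)"
  shows "shift n m j b (move n m i a v) (move n m i a u)"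
  using assms by (auto simp: shift_def move_commute)

lemma nat_exists_change_step:
  assumes "P lo" "\<not> P hi" "lo \<le> hi"
  shows "\<exists>r. lo \<le> r \<and> r < hi \<and> P r \<and> \<not> P (Suc r)"
  using assms(3,1,2)
proof (induction hi rule: dec_induct)
  case (step h)
  then show ?case by (cases "P h") (auto intro: less_SucI)
qed simp

text \<open>Replacing the vertices strictly between the two steps by their images under the opposite
  move turns the middle of the walk into a walk from p s to p (Suc t), two steps shorter.\<close>

lemma zwalk_cancel_opposite_shifts:
  assumes walk: "zwalk n m p d" and opp: "opposite_shifts n m p i a s t" and "t < d"
    and moved: "\<And>r. s < r \<Longrightarrow> r \<le> t \<Longrightarrow> zvert n m (move n m i (-a) (p r))"
  shows "\<exists>w. zwalk n m w (d - 2) \<and> w 0 = p 0 \<and> w (d - 2) = p d"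
proof -
  have st: "s < t" "t < d" and sh_s: "shift n m i a (p s) (p (Suc s))"
    and sh_t: "shift n m i (-a) (p t) (p (Suc t))"
    using opp \<open>t < d\<close> by (auto simp: opposite_shifts_def)
  have vert: "\<And>r. r \<le> d \<Longrightarrow> zvert n m (p r)"
    and adj: "\<And>r. r < d \<Longrightarrow> zadj n m (p r) (p (Suc r))"
    using walk by (auto simp: zwalk_def)
  let ?M = "move n m i (-a)"
  have back_s: "?M (p (Suc s)) = p s"
    using sh_s move_move_cancel[of n m "p s" i a] by (auto simp: shift_def)
  have fwd_t: "?M (p t) = p (Suc t)"
    using sh_t by (simp add: shift_def)
  define w where
    "w r = (if r < s then p r else if r < t then ?M (p (Suc r)) else p (Suc (Suc r)))" for r
  have "zvert n m (w r)" if "r \<le> d - 2" for r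
    using that moved[of "Suc r"] vert[of r] vert[of "Suc (Suc r)"] st by (auto simp: w_def)
  moreover have "zadj n m (w r) (w (Suc r))" if "r < d - 2" for r
  proof -
    consider "Suc r < s" | "Suc r = s" | "s \<le> r" "Suc r < t" | "Suc r = t" | "t \<le> r"
      by linarith
    then show ?thesis
    proof cases
      case 3
      obtain j b where "shift n m j b (p (Suc r)) (p (Suc (Suc r)))"
        using zwalk_step_shift[OF walk, of "Suc r"] 3 st by auto
      then have "shift n m j b (?M (p (Suc r))) (?M (p (Suc (Suc r))))"
        using shift_move moved 3 by auto
      then show ?thesis using 3 by (auto simp: w_def zadj_iff_shift)
    qed (use adj[of r] adj[of "Suc t"] adj[of "Suc (Suc r)"] that st back_s fwd_t in
         \<open>auto simp: w_def\<close>)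
  qed
  moreover have "w 0 = p 0"
    using back_s st by (auto simp: w_def)
  moreover have "w (d - 2) = p d"
  proof (cases "Suc t = d")
    case True
    then have "Suc (d - 2) = t" using st by simp
    then show ?thesis using True fwd_t st by (auto simp: w_def)
  next
    case False
    then have "Suc (Suc (d - 2)) = d" "\<not> d - 2 < t" using st by auto
    then show ?thesis using st by (auto simp: w_def)
  qed
  ultimately show ?thesis
    by (auto simp: zwalk_def)
qed

lemma zwalk_visit_extreme_value:
  assumes walk: "zwalk n m p d" and c: "1 \<le> c" "c \<le> m" and e: "e = 1 \<or> e = -1"
    and "lo \<le> r" "r \<le> hi" "hi \<le> d"
    and "p lo c \<noteq> e" "p r c = e" "p hi c \<noteq> e"
    and only_j: "\<And>k j' b. lo \<le> k \<Longrightarrow> k < hi \<Longrightarrow> shift n m j' b (p k) (p (Suc k))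
      \<Longrightarrow> c = j' \<or> c = Suc j' \<Longrightarrow> j' = j"
  obtains b k k' where "lo \<le> k" "k' < hi" "opposite_shifts n m p j b k k'"
proof -
  obtain k where k: "lo \<le> k" "k < r" "p k c \<noteq> e" "p (Suc k) c = e"
    using nat_exists_change_step[of "\<lambda>k. p k c \<noteq> e" lo r] assms by auto
  obtain k' where k': "r \<le> k'" "k' < hi" "p k' c = e" "p (Suc k') c \<noteq> e"
    using nat_exists_change_step[of "\<lambda>k. p k c = e" r hi] assms by auto
  have "zvert n m (p k)" "zvert n m (p (Suc k'))"
    using walk k k' \<open>r \<le> hi\<close> \<open>hi \<le> d\<close> by (auto simp: zwalk_def)
  then have range: "p k c \<in> {-1, 0, 1}" "p (Suc k') c \<in> {-1, 0, 1}"
    using zvert_interior_range c by blast+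
  have step_at_j: "\<exists>b. shift n m j b (p q) (p (Suc q))
      \<and> p (Suc q) c = p q c + (if c = j then b else -b)"
    if "lo \<le> q" "q < hi" "p (Suc q) c \<noteq> p q c" for q
  proof -
    have "q < d" using that \<open>hi \<le> d\<close> by simp
    then obtain j' b where sh: "shift n m j' b (p q) (p (Suc q))"
      by (rule zwalk_step_shift[OF walk])
    have change: "p (Suc q) c = p q c + (if c = j' then b else if c = Suc j' then -b else 0)"
      using shift_interior_coordinate[OF sh c] .
    then have "c = j' \<or> c = Suc j'"
      using that by (auto split: if_splits)
    moreover from this have "j' = j"
      using only_j that sh by blast
    ultimately show ?thesis
      using sh change by auto
  qed
  obtain b where b: "shift n m j b (p k) (p (Suc k))"
    "p (Suc k) c = p k c + (if c = j then b else -b)"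
    using step_at_j[of k] k \<open>r \<le> hi\<close> by auto
  obtain b' where b': "shift n m j b' (p k') (p (Suc k'))"
    "p (Suc k') c = p k' c + (if c = j then b' else -b')"
    using step_at_j[of k'] k k' by auto
  \<comment> \<open>Since e is extreme, entering it changes the coordinate by e and leaving it by -e.\<close>
  have "(if c = j then b else -b) = e"
    using b(2) k(3,4) range(1) e shift_unit[OF b(1)] by (auto split: if_splits)
  moreover have "(if c = j then b' else -b') = -e"
    using b'(2) k'(3,4) range(2) e shift_unit[OF b'(1)] by (auto split: if_splits)
  ultimately have "b' = -b"
    by (auto split: if_splits)
  then have "opposite_shifts n m p j b k k'"
    using b b' k k' by (auto simp: opposite_shifts_def)
  then show ?thesis
    using that k k' by auto
qed

definition innermost_opposite_shifts ::
    "nat \<Rightarrow> nat \<Rightarrow> (nat \<Rightarrow> nat \<Rightarrow> int) \<Rightarrow> nat \<Rightarrow> int \<Rightarrow> nat \<Rightarrow> nat \<Rightarrow> bool" where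
  "innermost_opposite_shifts n m p i a s t \<longleftrightarrow> opposite_shifts n m p i a s t \<and>
     (\<forall>j b s' t'. opposite_shifts n m p j b s' t' \<and> s \<le> s' \<and> t' \<le> t \<longrightarrow> s' = s \<and> t' = t)"

lemma innermost_opposite_shiftsD:
  assumes "innermost_opposite_shifts n m p i a s t"
  shows "opposite_shifts n m p i a s t"
    and "opposite_shifts n m p j b s' t' \<Longrightarrow> s \<le> s' \<Longrightarrow> t' \<le> t \<Longrightarrow> s' = s \<and> t' = t"
  using assms by (auto simp: innermost_opposite_shifts_def)

lemma exists_innermost_opposite_shifts:
  assumes "opposite_shifts n m p i a s t"
  obtains i' a' s' t' where "innermost_opposite_shifts n m p i' a' s' t'" "t' \<le> t"
  using assms
proof (induction "t - s" arbitrary: i a s t thesis rule: less_induct)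
  case less
  show ?case
  proof (cases "innermost_opposite_shifts n m p i a s t")
    case False
    then obtain j b s' t' where nested: "opposite_shifts n m p j b s' t'" "s \<le> s'" "t' \<le> t"
      "\<not> (s' = s \<and> t' = t)"
      using less.prems(2) by (auto simp: innermost_opposite_shifts_def)
    then have "t' - s' < t - s"
      using less.prems(2) by (auto simp: opposite_shifts_def)
    then obtain i' a' s'' t'' where "innermost_opposite_shifts n m p i' a' s'' t''" "t'' \<le> t'"
      using less.hyps nested(1) by blast
    then show ?thesis
      using less.prems(1) nested(3) by simp
  next
    case True
    then show ?thesis
      using less.prems(1) by simp
  qed
qed

lemma innermost_opposite_shifts_no_shift_between:
  assumes inner: "innermost_opposite_shifts n m p i a s t" and "s < k" "k < t"
  shows "\<not> shift n m i b (p k) (p (Suc k))"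
proof
  assume sh: "shift n m i b (p k) (p (Suc k))"
  note opp = innermost_opposite_shiftsD(1)[OF inner]
  have "a = 1 \<or> a = -1" "b = 1 \<or> b = -1"
    using opp shift_unit[OF sh] by (auto simp: opposite_shifts_def dest: shift_unit)
  then consider "b = a" | "b = -a" by auto
  then show False
  proof cases
    case 1
    then have "opposite_shifts n m p i a k t"
      using opp sh \<open>k < t\<close> by (auto simp: opposite_shifts_def)
    then show False
      using innermost_opposite_shiftsD(2)[OF inner, where s' = k and t' = t] \<open>s < k\<close> by simp
  next
    case 2
    then have "opposite_shifts n m p i a s k"
      using opp sh \<open>s < k\<close> by (auto simp: opposite_shifts_def)
    then show False
      using innermost_opposite_shiftsD(2)[OF inner, where s' = s and t' = k] \<open>k < t\<close> by simp
  qed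
qed

text \<open>Between innermost opposite shifts at i, the coordinates i and i+1 never reach the value
  that would block the reverse shift: they would have to enter and leave it through opposite
  shifts at i-1 or i+1 nested inside.\<close>

lemma innermost_opposite_shifts_avoid_extreme:
  assumes walk: "zwalk n m p d" and inner: "innermost_opposite_shifts n m p i a s t" and "t < d"
    and c: "1 \<le> c" "c \<le> m" "c = i \<or> c = Suc i"
    and "s < r" "r \<le> t"
  shows "p r c \<noteq> (if c = i then -a else a)"
proof
  define e where "e = (if c = i then -a else a)"
  assume "p r c = (if c = i then -a else a)"
  then have at_r: "p r c = e" by (simp add: e_def)
  note opp = innermost_opposite_shiftsD(1)[OF inner]
  have sh_s: "shift n m i a (p s) (p (Suc s))" and sh_t: "shift n m i (-a) (p t) (p (Suc t))"
    using opp by (auto simp: opposite_shifts_def)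
  have a: "a = 1 \<or> a = -1" using shift_unit[OF sh_s] .
  have "zvert n m (p s)" "zvert n m (p (Suc t))"
    using walk \<open>t < d\<close> opp by (auto simp: zwalk_def opposite_shifts_def)
  then have range: "p s c \<in> {-1, 0, 1}" "p (Suc t) c \<in> {-1, 0, 1}"
    using zvert_interior_range c by blast+
  have "p (Suc s) c = p s c - e" "p (Suc t) c = p t c + e"
    using shift_interior_coordinate[OF sh_s c(1,2)] shift_interior_coordinate[OF sh_t c(1,2)] c
    by (auto simp: e_def)
  then have after_s: "p (Suc s) c \<noteq> e" and before_t: "p t c \<noteq> e"
    using range a by (auto simp: e_def)
  have only_other: "j' = (if c = i then i - 1 else Suc i)"
    if "Suc s \<le> k" "k < t" "shift n m j' b (p k) (p (Suc k))" "c = j' \<or> c = Suc j'" for k j' b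
  proof -
    have "j' \<noteq> i"
      using innermost_opposite_shifts_no_shift_between[OF inner, of k b] that by auto
    then show ?thesis using that(4) c by auto
  qed
  have e: "e = 1 \<or> e = -1" and "Suc s \<le> r" "t \<le> d"
    using a \<open>s < r\<close> \<open>t < d\<close> by (auto simp: e_def)
  obtain b k k' where "Suc s \<le> k" "k' < t"
    "opposite_shifts n m p (if c = i then i - 1 else Suc i) b k k'"
    by (rule zwalk_visit_extreme_value[where j = "if c = i then i - 1 else Suc i",
          OF walk c(1,2) e \<open>Suc s \<le> r\<close> \<open>r \<le> t\<close> \<open>t \<le> d\<close> after_s at_r before_t only_other])
  then show False
    using innermost_opposite_shiftsD(2)[OF inner] by fastforce
qed

lemma innermost_opposite_shifts_move_zvert:
  assumes walk: "zwalk n m p d" and inner: "innermost_opposite_shifts n m p i a s t" and "t < d"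
    and "s < r" "r \<le> t"
  shows "zvert n m (move n m i (-a) (p r))"
proof (rule zvert_move)
  show v: "zvert n m (p r)"
    using walk \<open>r \<le> t\<close> \<open>t < d\<close> by (simp add: zwalk_def)
  have sh_s: "shift n m i a (p s) (p (Suc s))"
    using innermost_opposite_shiftsD(1)[OF inner] by (simp add: opposite_shifts_def)
  then show "i \<le> m" by (simp add: shift_def)
  have a: "a = 1 \<or> a = -1" using shift_unit[OF sh_s] .
  have avoid: "p r c \<noteq> (if c = i then -a else a)"
    if "1 \<le> c" "c \<le> m" "c = i \<or> c = Suc i" for c
    using innermost_opposite_shifts_avoid_extreme[OF walk inner \<open>t < d\<close> that]
      \<open>s < r\<close> \<open>r \<le> t\<close> by blast
  show "p r i + - a \<in> {-1, 0, 1}" if "1 \<le> i"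
    using avoid[of i] zvert_interior_range[OF v that] that \<open>i \<le> m\<close> a by auto
  show "p r (Suc i) - - a \<in> {-1, 0, 1}" if "Suc i \<le> m"
    using avoid[of "Suc i"] zvert_interior_range[OF v _ that] that a by auto
qed

theorem lemma3p2:
  fixes n m d :: nat and p :: "nat \<Rightarrow> nat \<Rightarrow> int"
  assumes "n \<ge> 1"
    and "zgeodesic n m p d"
  shows "\<forall>i\<le>m.
     (\<forall>k<d. left_shift n m i (p k) (p (Suc k)) \<or> right_shift n m i (p k) (p (Suc k))
             \<longrightarrow> left_shift n m i (p k) (p (Suc k)))
   \<or> (\<forall>k<d. left_shift n m i (p k) (p (Suc k)) \<or> right_shift n m i (p k) (p (Suc k))
             \<longrightarrow> right_shift n m i (p k) (p (Suc k)))"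
proof (rule ccontr)
  assume "\<not> ?thesis"
  then obtain i k k' where steps: "k < d" "k' < d"
    "shift n m i (-1) (p k) (p (Suc k))" "\<not> shift n m i 1 (p k) (p (Suc k))"
    "shift n m i 1 (p k') (p (Suc k'))" "\<not> shift n m i (-1) (p k') (p (Suc k'))"
    unfolding left_shift_iff_shift right_shift_iff_shift by blast
  then obtain a s t where "opposite_shifts n m p i a s t" "t < d"
  proof (cases k k' rule: linorder_cases)
    case less
    then show ?thesis using that[of "-1" k k'] steps by (simp add: opposite_shifts_def)
  next
    case greater
    then show ?thesis using that[of 1 k' k] steps by (simp add: opposite_shifts_def)
  qed (use steps in blast)
  then obtain i' a' s' t' where inner: "innermost_opposite_shifts n m p i' a' s' t'" "t' < d"
    by (metis exists_innermost_opposite_shifts order_le_less_trans)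
  have walk: "zwalk n m p d"
    using assms(2) by (simp add: zgeodesic_def)
  obtain w where "zwalk n m w (d - 2)" "w 0 = p 0" "w (d - 2) = p d"
    using zwalk_cancel_opposite_shifts[OF walk innermost_opposite_shiftsD(1)[OF inner(1)] inner(2)]
      innermost_opposite_shifts_move_zvert[OF walk inner] by blast
  then have "d \<le> d - 2"
    using assms(2) by (auto simp: zgeodesic_def)
  moreover have "s' < t'"
    using innermost_opposite_shiftsD(1)[OF inner(1)] by (simp add: opposite_shifts_def)
  ultimately show False
    using inner(2) by linarith
qed

end
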